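(* Let $n,m$ be positive integers, $\xi_m=e^{2\pi\sqrt{-1}/m}$, and $Q$ an integer valued positive definite quadratic form on $\mathbb{Z}^n$. Set \[ \Theta_{Q,m}(q)=\sum_{(k_1,\dots,k_n)\in\mathbb{Z}^n}q^{Q(k_1,\dots,k_n)}\xi_m^{k_1}. \] Suppose that $\Theta_{Q,m}(q)$ is unchanged when $\xi_m$ is replaced by $g(\xi_m)$, for every $g\in\mathrm{Gal}(\mathbb{Q}(\xi_m)/\mathbb{Q})$. Then $\Theta_{Q,m}(q)$ is a $\mathbb{Q}$-linear combination of theta series $\Theta_{Q'}(q)=\sum_{k\in\mathbb{Z}^n}q^{Q'(k)}$ of integer valued positive definite quadratic forms $Q'$ on $\mathbb{Z}^n$.
   Context: An integer valued positive definite quadratic form on $\mathbb{Z}^n$ is a quadratic form taking integer values on $\mathbb{Z}^n$ and positive definite over $\mathbb{R}$. The series are formal power series in $q$ with coefficients in $\mathbb{Q}(\xi_m)$, and $g$ acts on coefficients. *)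

theory Defs
  imports Complex_Main "HOL-Computational_Algebra.Formal_Power_Series"
    "HOL-Computational_Algebra.Polynomial"
begin

text \<open>Integer vectors in Z^n are represented as functions nat => int vanishing outside {..<n};
  the coordinate k_1 is k 0.\<close>
definition Zn :: "nat \<Rightarrow> (nat \<Rightarrow> int) set" where
  "Zn n = {k. \<forall>i\<ge>n. k i = 0}"

definition int_pd_qform :: "nat \<Rightarrow> ((nat \<Rightarrow> int) \<Rightarrow> int) \<Rightarrow> bool" where
  "int_pd_qform n Q \<longleftrightarrow>
     (\<exists>A :: nat \<Rightarrow> nat \<Rightarrow> real.
        (\<forall>k\<in>Zn n. real_of_int (Q k) = (\<Sum>i<n. \<Sum>j<n. A i j * real_of_int (k i) * real_of_int (k j))) \<and>
        (\<forall>x :: nat \<Rightarrow> real. (\<exists>i<n. x i \<noteq> 0) \<longrightarrow> (\<Sum>i<n. \<Sum>j<n. A i j * x i * x j) > 0))"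

definition xi :: "nat \<Rightarrow> complex" where
  "xi m = exp (2 * pi * \<i> / of_nat m)"

definition cyclo_field :: "nat \<Rightarrow> complex set" where
  "cyclo_field m = {z. \<exists>p :: rat poly. z = poly (map_poly of_rat p) (xi m)}"

text \<open>Gal(Q(xi_m)/Q): field automorphisms of Q(xi_m) (they automatically fix Q).\<close>
definition cyclo_gal :: "nat \<Rightarrow> (complex \<Rightarrow> complex) set" where
  "cyclo_gal m = {g. bij_betw g (cyclo_field m) (cyclo_field m) \<and> g 1 = 1 \<and>
     (\<forall>x\<in>cyclo_field m. \<forall>y\<in>cyclo_field m. g (x + y) = g x + g y \<and> g (x * y) = g x * g y)}"

definition theta_m :: "nat \<Rightarrow> ((nat \<Rightarrow> int) \<Rightarrow> int) \<Rightarrow> nat \<Rightarrow> complex fps" where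
  "theta_m n Q m = Abs_fps (\<lambda>N. \<Sum>k\<in>{k\<in>Zn n. Q k = int N}. xi m powi (k 0))"

definition theta :: "nat \<Rightarrow> ((nat \<Rightarrow> int) \<Rightarrow> int) \<Rightarrow> complex fps" where
  "theta n Q = Abs_fps (\<lambda>N. of_nat (card {k\<in>Zn n. Q k = int N}))"

end

theory Submission
  imports Defs "Berlekamp_Zassenhaus.Factor_Bound" "Jordan_Normal_Form.Char_Poly"
    "HOL-Number_Theory.Cong"
begin

text \<open>
  If \<open>\<Theta>\<^sub>Q\<^sub>,\<^sub>m\<close> is Galois invariant it equals its average over the automorphisms
  \<open>\<sigma>\<^sub>a : \<xi>\<^sub>m \<mapsto> \<xi>\<^sub>m\<^sup>a\<close>, \<open>a\<close> coprime to \<open>m\<close>, so its \<open>N\<close>-th coefficient is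
  \<open>\<phi>(m)\<^sup>-\<^sup>1 \<Sum>\<^bsub>Q(k) = N\<^esub> c\<^sub>m(k\<^sub>1)\<close> with the Ramanujan sums \<open>c\<^sub>m\<close>. Since
  \<open>\<Sum>\<^bsub>d | m\<^esub> c\<^sub>d(j) = m [m | j]\<close>, each \<open>c\<^sub>m(j)\<close> is an integer combination of indicators
  \<open>[e | j]\<close>, \<open>e \<le> m\<close>, and the number of \<open>k\<close> with \<open>Q(k) = N\<close> and \<open>e | k\<^sub>1\<close> is the \<open>N\<close>-th
  coefficient of the theta series of the positive definite form \<open>Q(e k\<^sub>1, k\<^sub>2, \<dots>, k\<^sub>n)\<close>.

  That \<open>\<sigma>\<^sub>a\<close> is well defined amounts to the irreducibility of cyclotomic polynomials: a
  rational polynomial vanishing at a root of unity \<open>z\<close> of order dividing \<open>m\<close> vanishes at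
  \<open>z\<^sup>q\<close> for every prime \<open>q\<close> not dividing \<open>m\<close>. This is Dedekind's argument, using Frobenius congruences
  modulo \<open>q\<close> in \<open>\<int>[z]\<close> and the fact that rational elements of \<open>\<int>[z]\<close> are integers.
\<close>

(* Berlekamp_Zassenhaus introduces its own constant coprime; we mean the one of class algebraic_semidom. *)
hide_const (open) comm_monoid_mult_class.coprime

section \<open>The ring \<open>\<int>[z]\<close> and Frobenius congruences\<close>

definition Z_adjoin :: "complex \<Rightarrow> complex set" where
  "Z_adjoin z = range (\<lambda>w :: int poly. poly (of_int_poly w) z)"

definition Z_adjoin_multiple :: "complex \<Rightarrow> nat \<Rightarrow> complex \<Rightarrow> bool" where
  "Z_adjoin_multiple z q A \<longleftrightarrow> (\<exists>B\<in>Z_adjoin z. A = of_nat q * B)"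

lemma power_mod_root_of_unity:
  fixes z :: complex assumes "z ^ m = 1" shows "z ^ k = z ^ (k mod m)"
proof -
  have "z ^ k = (z ^ m) ^ (k div m) * z ^ (k mod m)"
    by (metis div_mult_mod_eq power_add power_mult mult.commute)
  thus ?thesis using assms by simp
qed

lemma poly_of_int_poly_altdef:
  "poly (of_int_poly w) (x :: complex) = (\<Sum>i\<le>degree w. of_int (Polynomial.coeff w i) * x ^ i)"
  by (simp add: poly_altdef degree_map_poly coeff_map_poly)

lemma Z_adjoin_iff: "A \<in> Z_adjoin z \<longleftrightarrow> (\<exists>w. A = poly (of_int_poly w) z)"
  unfolding Z_adjoin_def by auto

lemma Z_adjoin_of_int [intro, simp]: "of_int c \<in> Z_adjoin z"
  unfolding Z_adjoin_iff by (rule exI[of _ "[:c:]"]) (simp add: poly_of_int_poly_altdef)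

lemma Z_adjoin_of_nat [intro, simp]: "of_nat c \<in> Z_adjoin z"
  using Z_adjoin_of_int[of "int c" z] by simp

lemma Z_adjoin_0 [intro, simp]: "0 \<in> Z_adjoin z"
  using Z_adjoin_of_int[of 0 z] by simp

lemma Z_adjoin_1 [intro, simp]: "1 \<in> Z_adjoin z"
  using Z_adjoin_of_int[of 1 z] by simp

lemma Z_adjoin_self [intro, simp]: "z \<in> Z_adjoin z"
  unfolding Z_adjoin_iff by (rule exI[of _ "[:0, 1:]"]) simp

lemma Z_adjoin_add [intro]:
  assumes "A \<in> Z_adjoin z" "B \<in> Z_adjoin z" shows "A + B \<in> Z_adjoin z"
proof -
  from assms obtain a b where "A = poly (of_int_poly a) z" "B = poly (of_int_poly b) z"
    unfolding Z_adjoin_iff by auto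
  thus ?thesis unfolding Z_adjoin_iff by (intro exI[of _ "a + b"]) (simp add: hom_distribs)
qed

lemma Z_adjoin_mult [intro]:
  assumes "A \<in> Z_adjoin z" "B \<in> Z_adjoin z" shows "A * B \<in> Z_adjoin z"
proof -
  from assms obtain a b where "A = poly (of_int_poly a) z" "B = poly (of_int_poly b) z"
    unfolding Z_adjoin_iff by auto
  thus ?thesis unfolding Z_adjoin_iff by (intro exI[of _ "a * b"]) (simp add: hom_distribs)
qed

lemma Z_adjoin_power [intro]: "A \<in> Z_adjoin z \<Longrightarrow> A ^ n \<in> Z_adjoin z"
  by (induction n) auto

lemma Z_adjoin_sum [intro]: "(\<And>i. i \<in> S \<Longrightarrow> f i \<in> Z_adjoin z) \<Longrightarrow> (\<Sum>i\<in>S. f i) \<in> Z_adjoin z"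
  by (induction S rule: infinite_finite_induct) auto

text \<open>
  The matrix of multiplication by \<open>w(z)\<close> on the spanning family \<open>1, z, \<dots>, z\<^sup>m\<^sup>-\<^sup>1\<close> of
  \<open>\<int>[z]\<close>, for \<open>z\<^sup>m = 1\<close>.
\<close>
definition mult_matrix :: "nat \<Rightarrow> int poly \<Rightarrow> int mat" where
  "mult_matrix m w = mat m m (\<lambda>(i, j). \<Sum>t\<le>degree w. if (i + t) mod m = j then Polynomial.coeff w t else 0)"

lemma mult_matrix_mult_vec:
  fixes z :: complex
  assumes zm: "z ^ m = 1" and m: "m > 0"
  shows "of_int_hom.mat_hom (mult_matrix m w) *\<^sub>v vec m (\<lambda>j. z ^ j) =
    poly (of_int_poly w) z \<cdot>\<^sub>v vec m (\<lambda>j. z ^ j)"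
proof (rule eq_vecI)
  fix i assume "i < dim_vec (poly (of_int_poly w) z \<cdot>\<^sub>v vec m (\<lambda>j. z ^ j))"
  hence i: "i < m" by simp
  have "(of_int_hom.mat_hom (mult_matrix m w) *\<^sub>v vec m (\<lambda>j. z ^ j)) $ i =
      (\<Sum>j<m. \<Sum>t\<le>degree w. if (i + t) mod m = j then of_int (Polynomial.coeff w t) * z ^ j else 0)"
    using i by (auto simp: mult_matrix_def scalar_prod_def lessThan_atLeast0 of_int_sum
        sum_distrib_right intro!: sum.cong)
  also have "\<dots> = (\<Sum>t\<le>degree w. \<Sum>j<m.
      if (i + t) mod m = j then of_int (Polynomial.coeff w t) * z ^ j else 0)"
    by (rule sum.swap)
  also have "\<dots> = (\<Sum>t\<le>degree w. of_int (Polynomial.coeff w t) * z ^ ((i + t) mod m))"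
    using m by (intro sum.cong refl) (simp add: sum.delta)
  also have "\<dots> = (\<Sum>t\<le>degree w. z ^ i * (of_int (Polynomial.coeff w t) * z ^ t))"
    by (intro sum.cong refl) (simp add: power_mod_root_of_unity[OF zm, of "i + _", symmetric] power_add)
  also have "\<dots> = z ^ i * poly (of_int_poly w) z" by (simp add: poly_of_int_poly_altdef sum_distrib_left)
  finally show "(of_int_hom.mat_hom (mult_matrix m w) *\<^sub>v vec m (\<lambda>j. z ^ j)) $ i =
      (poly (of_int_poly w) z \<cdot>\<^sub>v vec m (\<lambda>j. z ^ j)) $ i"
    using i by simp
qed (simp add: mult_matrix_def)

lemma Z_adjoin_root_of_unity_algebraic_int:
  fixes z :: complex
  assumes zm: "z ^ m = 1" and m: "m > 0" and A: "A \<in> Z_adjoin z"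
  shows "algebraic_int A"
proof -
  from A obtain w where Aw: "A = poly (of_int_poly w) z" unfolding Z_adjoin_iff by auto
  define M where "M = mult_matrix m w"
  define v :: "complex vec" where "v = vec m (\<lambda>j. z ^ j)"
  have M: "M \<in> carrier_mat m m" unfolding M_def mult_matrix_def by auto
  have "v \<noteq> 0\<^sub>v m"
  proof
    assume "v = 0\<^sub>v m"
    hence "v $ 0 = 0\<^sub>v m $ 0" by simp
    thus False using m by (simp add: v_def)
  qed
  hence "eigenvalue (of_int_hom.mat_hom M) A"
    using mult_matrix_mult_vec[OF zm m, of w] M unfolding eigenvalue_def eigenvector_def Aw M_def v_def
    by (auto intro!: exI[of _ "vec m (\<lambda>j. z ^ j)"])
  hence "poly (char_poly (of_int_hom.mat_hom M)) A = 0"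
    using M by (subst (asm) eigenvalue_root_char_poly[of _ m]) auto
  hence "poly (of_int_poly (char_poly M)) A = 0"
    using of_int_hom.char_poly_hom[OF M, where 'a=complex] by simp
  moreover have "lead_coeff (char_poly M) = 1" using degree_monic_char_poly[OF M] by simp
  ultimately show ?thesis unfolding algebraic_int_altdef_ipoly by blast
qed

lemma Z_adjoin_root_of_unity_rational_imp_int:
  fixes z :: complex
  assumes "z ^ m = 1" "m > 0" "A \<in> Z_adjoin z" "A \<in> \<rat>"
  shows "A \<in> \<int>"
  using Z_adjoin_root_of_unity_algebraic_int[OF assms(1-3)] assms(4) rational_algebraic_int_is_int by blast

lemma Z_adjoin_multiple_0 [simp]: "Z_adjoin_multiple z q 0"
  unfolding Z_adjoin_multiple_def by auto

lemma Z_adjoin_multiple_add: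
  assumes "Z_adjoin_multiple z q A" "Z_adjoin_multiple z q B"
  shows "Z_adjoin_multiple z q (A + B)"
proof -
  from assms obtain a b where "a \<in> Z_adjoin z" "b \<in> Z_adjoin z" "A = of_nat q * a" "B = of_nat q * b"
    unfolding Z_adjoin_multiple_def by auto
  thus ?thesis unfolding Z_adjoin_multiple_def by (intro bexI[of _ "a + b"]) (auto simp: algebra_simps)
qed

lemma Z_adjoin_multiple_mult:
  "Z_adjoin_multiple z q A \<Longrightarrow> B \<in> Z_adjoin z \<Longrightarrow> Z_adjoin_multiple z q (A * B)"
  unfolding Z_adjoin_multiple_def by (auto intro!: bexI[of _ "_ * B"])

lemma Z_adjoin_multiple_of_int: "int q dvd c \<Longrightarrow> Z_adjoin_multiple z q (of_int c)"
  unfolding Z_adjoin_multiple_def by (auto elim!: dvdE intro!: bexI[of _ "of_int _"])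

lemma Z_adjoin_multiple_of_nat_imp_dvd:
  fixes z :: complex
  assumes zm: "z ^ m = 1" and m: "m > 0" and q: "q > 0" and c: "Z_adjoin_multiple z q (of_nat c)"
  shows "q dvd c"
proof -
  from c obtain A where A: "A \<in> Z_adjoin z" "of_nat c = of_nat q * A"
    unfolding Z_adjoin_multiple_def by auto
  have "A = of_nat c / of_nat q" using A(2) q by simp
  hence "A \<in> \<int>" using Z_adjoin_root_of_unity_rational_imp_int[OF zm m A(1)] by simp
  then obtain k where "A = of_int k" by (auto elim: Ints_cases)
  hence "int c = int q * k" using A(2) by (metis of_int_eq_iff of_int_mult of_int_of_nat_eq)
  thus "q dvd c" by (metis dvd_triv_left int_dvd_int_iff)
qed

lemma add_power_prime_eq:
  fixes x y :: "'a :: comm_ring_1"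
  assumes q: "prime q"
  shows "(x + y) ^ q - x ^ q - y ^ q =
    of_nat q * (\<Sum>k\<in>{0<..<q}. of_nat ((q choose k) div q) * x ^ k * y ^ (q - k))"
proof -
  have q0: "q > 0" using q prime_gt_0_nat by blast
  have "{..q} = insert 0 (insert q {0<..<q})" using q0 by auto
  hence "(x + y) ^ q = (\<Sum>k\<in>insert 0 (insert q {0<..<q}). of_nat (q choose k) * x ^ k * y ^ (q - k))"
    by (simp add: binomial_ring)
  also have "\<dots> = y ^ q + (x ^ q + (\<Sum>k\<in>{0<..<q}. of_nat (q choose k) * x ^ k * y ^ (q - k)))"
    using q0 by (subst sum.insert; simp)+
  also have "(\<Sum>k\<in>{0<..<q}. of_nat (q choose k) * x ^ k * y ^ (q - k)) =
      (\<Sum>k\<in>{0<..<q}. of_nat q * (of_nat ((q choose k) div q) * x ^ k * y ^ (q - k)))"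
  proof (intro sum.cong refl)
    fix k assume "k \<in> {0<..<q}"
    hence "q * ((q choose k) div q) = q choose k" using dvd_choose_prime[of k q] q by auto
    thus "of_nat (q choose k) * x ^ k * y ^ (q - k) =
        of_nat q * (of_nat ((q choose k) div q) * x ^ k * y ^ (q - k))"
      by (metis mult.assoc of_nat_mult)
  qed
  finally show ?thesis by (simp add: sum_distrib_left)
qed

lemma Z_adjoin_multiple_add_power_prime:
  assumes q: "prime q" and A: "A \<in> Z_adjoin z" and B: "B \<in> Z_adjoin z"
  shows "Z_adjoin_multiple z q ((A + B) ^ q - A ^ q - B ^ q)"
  unfolding add_power_prime_eq[OF q] Z_adjoin_multiple_def
  by (auto intro!: Z_adjoin_sum Z_adjoin_mult Z_adjoin_power A B)

lemma prime_dvd_power_prime_minus_self_nat: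
  assumes q: "prime q"
  shows "int q dvd int r ^ q - int r"
proof (induction r)
  case 0
  thus ?case using q prime_gt_0_nat by (simp add: zero_power)
next
  case (Suc r)
  have "int (Suc r) ^ q - int (Suc r) = ((int r + 1) ^ q - int r ^ q - 1 ^ q) + (int r ^ q - int r)"
    by (simp add: add.commute)
  moreover have "int q dvd (int r + 1) ^ q - int r ^ q - 1 ^ q"
    unfolding add_power_prime_eq[OF q] by simp
  ultimately show ?case using Suc.IH by (metis dvd_add)
qed

lemma prime_dvd_power_prime_minus_self:
  assumes q: "prime (q :: nat)"
  shows "int q dvd a ^ q - a"
proof -
  define r where "r = nat (a mod int q)"
  have ar: "[a = int r] (mod int q)"
    using q prime_gt_0_nat unfolding r_def cong_def by simp
  hence "[a ^ q - a = int r ^ q - int r] (mod int q)" by (intro cong_diff cong_pow)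
  thus ?thesis using prime_dvd_power_prime_minus_self_nat[OF q, of r] cong_dvd_iff by blast
qed

lemma Z_adjoin_multiple_frobenius:
  assumes q: "prime q"
  shows "Z_adjoin_multiple z q (poly (of_int_poly w) z ^ q - poly (of_int_poly w) (z ^ q))"
proof (induction w)
  case 0
  have "q > 0" using q prime_gt_0_nat by blast
  thus ?case by (simp add: zero_power)
next
  case (pCons a w)
  define W where "W = poly (of_int_poly w) z"
  define W' where "W' = poly (of_int_poly w) (z ^ q)"
  have W: "W \<in> Z_adjoin z" unfolding W_def Z_adjoin_iff by auto
  have "poly (of_int_poly (pCons a w)) z ^ q - poly (of_int_poly (pCons a w)) (z ^ q) =
        ((of_int a + z * W) ^ q - of_int a ^ q - (z * W) ^ q) + of_int (a ^ q - a) + (W ^ q - W') * z ^ q"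
    unfolding W_def W'_def
    by (simp add: of_int_hom.map_poly_pCons_hom power_mult_distrib) (simp add: algebra_simps)
  moreover have "Z_adjoin_multiple z q ((of_int a + z * W) ^ q - of_int a ^ q - (z * W) ^ q)"
    using W by (intro Z_adjoin_multiple_add_power_prime q) auto
  moreover have "Z_adjoin_multiple z q (of_int (a ^ q - a))"
    by (intro Z_adjoin_multiple_of_int prime_dvd_power_prime_minus_self q)
  moreover have "Z_adjoin_multiple z q ((W ^ q - W') * z ^ q)"
    using pCons.IH unfolding W_def W'_def by (intro Z_adjoin_multiple_mult) auto
  ultimately show ?case by (metis Z_adjoin_multiple_add)
qed


section \<open>Conjugates of roots of unity\<close>

interpretation of_rat_poly: map_poly_comm_ring_hom "of_rat :: rat \<Rightarrow> complex" ..

lemma poly_monom_minus_1: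
  "poly (of_int_poly (Polynomial.monom 1 m - 1 :: int poly)) (x :: complex) = x ^ m - 1"
  by (simp add: hom_distribs poly_monom Polynomial.map_poly_monom)

text \<open>
  From \<open>f h = X\<^sup>m - 1\<close> one gets \<open>h(z) f'(z) = m z\<^sup>m\<^sup>-\<^sup>1\<close>; if \<open>h(z\<^sup>q) = 0\<close>, the Frobenius
  congruence makes \<open>h(z)\<^sup>q\<close>, and hence \<open>m\<^sup>q\<close>, divisible by \<open>q\<close> in \<open>\<int>[z]\<close>.
\<close>
lemma factor_monom_minus_1_root_power_prime:
  fixes z :: complex and f h :: "int poly"
  assumes q: "prime q" and qm: "\<not> q dvd m" and m: "m > 0" and zm: "z ^ m = 1"
    and fh: "f * h = Polynomial.monom 1 m - 1" and fz: "poly (of_int_poly f) z = 0"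
  shows "poly (of_int_poly f) (z ^ q) = 0"
proof (rule ccontr)
  assume nz: "poly (of_int_poly f) (z ^ q) \<noteq> 0"
  have fh_eval: "poly (of_int_poly f) x * poly (of_int_poly h) x = x ^ m - 1" for x :: complex
    using poly_monom_minus_1[of m x] by (simp flip: fh add: hom_distribs)
  have "(z ^ q) ^ m = 1" by (metis power_mult mult.commute zm power_one)
  hence hq: "poly (of_int_poly h) (z ^ q) = 0" using fh_eval[of "z ^ q"] nz by simp
  define H where "H = poly (of_int_poly h) z"
  define F' where "F' = poly (of_int_poly (pderiv f)) z"
  have Hq: "Z_adjoin_multiple z q (H ^ q)"
    using Z_adjoin_multiple_frobenius[OF q, of z h] hq unfolding H_def by simp
  have "f * pderiv h + h * pderiv f = Polynomial.monom (of_nat m) (m - 1)"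
    using arg_cong[OF fh, of pderiv] by (simp add: pderiv_mult pderiv_diff pderiv_monom)
  hence "poly (of_int_poly (f * pderiv h + h * pderiv f)) z
       = poly (of_int_poly (Polynomial.monom (of_nat m) (m - 1) :: int poly)) z"
    by simp
  hence "H * F' = of_nat m * z ^ (m - 1)"
    using fz unfolding H_def F'_def by (simp add: hom_distribs poly_monom Polynomial.map_poly_monom)
  hence "of_nat m ^ q * (z ^ (m - 1) * z) ^ q = H ^ q * (F' ^ q * z ^ q)"
    by (metis power_mult_distrib mult.assoc)
  moreover have "z ^ (m - 1) * z = 1" using m zm by (cases m) (auto simp: mult.commute)
  moreover have "Z_adjoin_multiple z q (H ^ q * (F' ^ q * z ^ q))"
    by (intro Z_adjoin_multiple_mult Hq Z_adjoin_mult Z_adjoin_power Z_adjoin_self)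
      (auto simp: F'_def Z_adjoin_iff)
  ultimately have "Z_adjoin_multiple z q (of_nat (m ^ q))" by simp
  hence "q dvd m ^ q" using Z_adjoin_multiple_of_nat_imp_dvd[OF zm m] prime_gt_0_nat[OF q] by blast
  thus False using q qm prime_dvd_power by blast
qed

lemma of_rat_of_int_poly: "map_poly (of_rat :: rat \<Rightarrow> complex) (of_int_poly w) = of_int_poly w"
  by (simp add: map_poly_map_poly o_def)

text \<open>
  The gcd of (a clearing of denominators of) \<open>p\<close> with \<open>X\<^sup>m - 1\<close> over \<open>\<int>\<close> still vanishes
  at \<open>z\<close>: over \<open>\<rat>\<close> it is a Bezout combination, and by Gauss's lemma it agrees with the
  rational gcd up to a constant.
\<close>
lemma rat_poly_root_of_unity_int_factor:
  fixes z :: complex and p :: "rat poly"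
  assumes m: "m > 0" and zm: "z ^ m = 1" and pz: "poly (map_poly of_rat p) z = 0"
  obtains g h :: "int poly" where "g * h = Polynomial.monom 1 m - 1" "poly (of_int_poly g) z = 0"
    "\<And>x :: complex. poly (of_int_poly g) x = 0 \<Longrightarrow> poly (map_poly of_rat p) x = 0"
proof -
  obtain d pi where dp: "rat_to_int_poly p = (d, pi)" by force
  from rat_to_int_poly[OF dp] have p: "p = Polynomial.smult (inverse (of_int d)) (of_int_poly pi)"
    and d: "d > 0" by auto
  have p_eval: "poly (map_poly of_rat p) x = of_rat (inverse (of_int d)) * poly (of_int_poly pi) x"
    for x :: complex
    by (simp add: p of_rat_hom.map_poly_hom_smult of_rat_of_int_poly)
  define X :: "int poly" where "X = Polynomial.monom 1 m - 1"
  have "Polynomial.coeff X m \<noteq> 0" using m by (simp add: X_def coeff_monom)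
  hence X0: "X \<noteq> 0" by auto
  define g where "g = gcd pi X"
  obtain h where "X = g * h" unfolding g_def by (metis gcd_dvd2 dvdE)
  hence gh: "g * h = Polynomial.monom 1 m - 1" unfolding X_def by simp
  obtain r where gr: "pi = g * r" unfolding g_def by (metis gcd_dvd1 dvdE)
  define G where "G = gcd (of_int_poly pi :: rat poly) (of_int_poly X)"
  have G: "G = Polynomial.smult (inverse (of_int (lead_coeff g))) (of_int_poly g)"
    unfolding G_def g_def by (rule gcd_rat_to_gcd_int)
  obtain a b where ab: "a * of_int_poly pi + b * of_int_poly X = G"
    using bezout_coefficients_fst_snd unfolding G_def by blast
  have "poly (map_poly of_rat (a * of_int_poly pi + b * of_int_poly X)) z = 0"
    using pz p_eval[of z] d poly_monom_minus_1[of m z] zm by (simp add: hom_distribs of_rat_of_int_poly X_def)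
  hence gz: "poly (of_int_poly g) z = 0"
    using X0 unfolding ab G g_def by (simp add: of_rat_hom.map_poly_hom_smult of_rat_of_int_poly)
  have gp: "poly (map_poly of_rat p) x = 0" if "poly (of_int_poly g) x = 0" for x :: complex
    using that p_eval[of x] by (simp add: gr hom_distribs)
  show ?thesis by (rule that[OF gh gz gp])
qed

lemma rat_poly_root_power_prime:
  fixes z :: complex and p :: "rat poly"
  assumes q: "prime q" and qm: "\<not> q dvd m" and m: "m > 0" and zm: "z ^ m = 1"
    and pz: "poly (map_poly of_rat p) z = 0"
  shows "poly (map_poly of_rat p) (z ^ q) = 0"
proof -
  obtain g h where gh: "g * h = Polynomial.monom 1 m - 1" and gz: "poly (of_int_poly g) z = 0"
    and gp: "\<And>x :: complex. poly (of_int_poly g) x = 0 \<Longrightarrow> poly (map_poly of_rat p) x = 0"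
    using rat_poly_root_of_unity_int_factor[OF m zm pz] by blast
  have "poly (of_int_poly g) (z ^ q) = 0" by (rule factor_monom_minus_1_root_power_prime[OF q qm m zm gh gz])
  thus ?thesis by (rule gp)
qed

lemma rat_poly_root_power_coprime:
  fixes z :: complex and p :: "rat poly"
  assumes "m > 0" "coprime a m" "z ^ m = 1" "poly (map_poly of_rat p) z = 0"
  shows "poly (map_poly of_rat p) (z ^ a) = 0"
  using assms
proof (induction a arbitrary: z rule: less_induct)
  case (less a)
  consider "a = 0" | "a = 1" | "a > 1" by linarith
  thus ?case
  proof cases
    case 1
    hence "z = 1" using less.prems(2,3) by simp
    thus ?thesis using less.prems(4) 1 by simp
  next
    case 2
    thus ?thesis using less.prems(4) by simp
  next
    case 3
    then obtain q where q: "prime q" "q dvd a" using prime_factor_nat[of a] by auto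
    then obtain b where ab: "a = q * b" by (elim dvdE)
    have "b > 0" using ab 3 by (cases b) auto
    hence "b < a" using ab prime_gt_1_nat[OF q(1)] by simp
    have qm: "\<not> q dvd m"
      using q less.prems(2) coprime_common_divisor[of a m q] by (auto simp: prime_def)
    have "coprime b m" using less.prems(2) ab by simp
    moreover have "(z ^ q) ^ m = 1" using less.prems(3) by (metis power_mult mult.commute power_one)
    moreover have "poly (map_poly of_rat p) (z ^ q) = 0"
      by (rule rat_poly_root_power_prime[OF q(1) qm less.prems(1,3,4)])
    ultimately have "poly (map_poly of_rat p) ((z ^ q) ^ b) = 0"
      using less.IH[OF \<open>b < a\<close> less.prems(1)] by blast
    thus ?thesis using ab by (simp add: power_mult)
  qed
qed

section \<open>The Galois automorphisms \<open>\<xi>\<^sub>m \<mapsto> \<xi>\<^sub>m\<^sup>a\<close>\<close>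

lemma xi_power_eq_1: "m > 0 \<Longrightarrow> xi m ^ m = 1"
  unfolding xi_def by (simp flip: exp_of_nat_mult)

lemma poly_pcompose_monom_of_rat:
  "poly (map_poly (of_rat :: rat \<Rightarrow> complex) (p \<circ>\<^sub>p Polynomial.monom 1 k)) x = poly (map_poly of_rat p) (x ^ k)"
  by (simp add: of_rat_hom.map_poly_pcompose poly_pcompose Polynomial.map_poly_monom poly_monom)

lemma poly_xi_in_cyclo_field: "poly (map_poly of_rat p) (xi m) \<in> cyclo_field m"
  unfolding cyclo_field_def by auto

text \<open>
  The representing polynomial is picked by \<open>SOME\<close>; for \<open>a\<close> coprime to \<open>m\<close> the value does
  not depend on that choice (\<open>cyclo_aut_poly\<close>).
\<close>
definition cyclo_aut :: "nat \<Rightarrow> nat \<Rightarrow> complex \<Rightarrow> complex" where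
  "cyclo_aut m a z = (if z \<in> cyclo_field m then
      poly (map_poly of_rat (SOME p. z = poly (map_poly of_rat p) (xi m))) (xi m ^ a) else z)"

lemma cyclo_aut_poly:
  assumes m: "m > 0" and a: "coprime a m"
  shows "cyclo_aut m a (poly (map_poly of_rat p) (xi m)) = poly (map_poly of_rat p) (xi m ^ a)"
proof -
  define z where "z = poly (map_poly of_rat p) (xi m)"
  define p0 where "p0 = (SOME p. z = poly (map_poly of_rat p) (xi m))"
  have "z = poly (map_poly of_rat p0) (xi m)"
    unfolding p0_def by (rule someI_ex) (auto simp: z_def)
  hence "poly (map_poly of_rat (p0 - p)) (xi m) = 0" by (simp add: z_def hom_distribs)
  hence "poly (map_poly of_rat (p0 - p)) (xi m ^ a) = 0"
    by (rule rat_poly_root_power_coprime[OF m a xi_power_eq_1[OF m]])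
  moreover have "z \<in> cyclo_field m" unfolding z_def by (rule poly_xi_in_cyclo_field)
  ultimately show ?thesis
    unfolding cyclo_aut_def z_def[symmetric] p0_def[symmetric] by (simp add: hom_distribs)
qed

lemma xi_power_coprime_inverse:
  assumes m: "m > 0" and a: "coprime a m"
  obtains a' where "coprime a' m" "(xi m ^ a) ^ a' = xi m"
proof -
  obtain a' where aa': "[a * a' = 1] (mod m)" using cong_solve_coprime_nat[OF a] by auto
  have "coprime a' m"
    using aa' by (subst coprime_iff_invertible_nat) (auto simp: mult.commute intro!: exI[of _ a])
  moreover have "(xi m ^ a) ^ a' = xi m"
    using power_mod_root_of_unity[OF xi_power_eq_1[OF m], of "a * a'"]
      power_mod_root_of_unity[OF xi_power_eq_1[OF m], of 1] aa'
    by (simp add: power_mult cong_def)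
  ultimately show ?thesis by (rule that)
qed

lemma cyclo_aut_in_cyclo_field:
  assumes "m > 0" "coprime a m" "z \<in> cyclo_field m"
  shows "cyclo_aut m a z \<in> cyclo_field m"
proof -
  from assms(3) obtain p where "z = poly (map_poly of_rat p) (xi m)" unfolding cyclo_field_def by auto
  hence "cyclo_aut m a z = poly (map_poly of_rat (p \<circ>\<^sub>p Polynomial.monom 1 a)) (xi m)"
    by (simp add: cyclo_aut_poly[OF assms(1,2)] poly_pcompose_monom_of_rat)
  thus ?thesis by (simp add: poly_xi_in_cyclo_field)
qed

lemma inj_on_cyclo_aut:
  assumes m: "m > 0" and a: "coprime a m"
  shows "inj_on (cyclo_aut m a) (cyclo_field m)"
proof (rule inj_onI)
  fix z1 z2 assume z1: "z1 \<in> cyclo_field m" and z2: "z2 \<in> cyclo_field m"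
    and eq: "cyclo_aut m a z1 = cyclo_aut m a z2"
  obtain a' where a': "coprime a' m" and xi_inv: "(xi m ^ a) ^ a' = xi m"
    using xi_power_coprime_inverse[OF m a] .
  have xam: "(xi m ^ a) ^ m = 1" by (metis power_mult mult.commute xi_power_eq_1[OF m] power_one)
  from z1 obtain p1 where p1: "z1 = poly (map_poly of_rat p1) (xi m)" unfolding cyclo_field_def by auto
  from z2 obtain p2 where p2: "z2 = poly (map_poly of_rat p2) (xi m)" unfolding cyclo_field_def by auto
  have "poly (map_poly of_rat (p1 - p2)) (xi m ^ a) = 0"
    using eq unfolding p1 p2 cyclo_aut_poly[OF m a] by (simp add: hom_distribs)
  hence "poly (map_poly of_rat (p1 - p2)) ((xi m ^ a) ^ a') = 0"
    by (rule rat_poly_root_power_coprime[OF m a' xam])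
  thus "z1 = z2" unfolding xi_inv p1 p2 by (simp add: hom_distribs)
qed

lemma cyclo_aut_image:
  assumes m: "m > 0" and a: "coprime a m"
  shows "cyclo_aut m a ` cyclo_field m = cyclo_field m"
proof
  show "cyclo_aut m a ` cyclo_field m \<subseteq> cyclo_field m"
    using cyclo_aut_in_cyclo_field[OF m a] by blast
  show "cyclo_field m \<subseteq> cyclo_aut m a ` cyclo_field m"
  proof
    fix w assume "w \<in> cyclo_field m"
    then obtain p where p: "w = poly (map_poly of_rat p) (xi m)" unfolding cyclo_field_def by auto
    obtain a' where xi_inv: "(xi m ^ a) ^ a' = xi m" using xi_power_coprime_inverse[OF m a] .
    define z where "z = poly (map_poly of_rat (p \<circ>\<^sub>p Polynomial.monom 1 a')) (xi m)"
    have "cyclo_aut m a z = poly (map_poly of_rat p) ((xi m ^ a) ^ a')"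
      unfolding z_def by (simp only: cyclo_aut_poly[OF m a])
        (simp add: poly_pcompose_monom_of_rat power_mult mult.commute)
    hence "cyclo_aut m a z = w" unfolding xi_inv p .
    moreover have "z \<in> cyclo_field m" unfolding z_def by (rule poly_xi_in_cyclo_field)
    ultimately show "w \<in> cyclo_aut m a ` cyclo_field m" by blast
  qed
qed

lemma cyclo_aut_add_mult:
  assumes m: "m > 0" and a: "coprime a m" and "x \<in> cyclo_field m" "y \<in> cyclo_field m"
  shows "cyclo_aut m a (x + y) = cyclo_aut m a x + cyclo_aut m a y"
    and "cyclo_aut m a (x * y) = cyclo_aut m a x * cyclo_aut m a y"
proof -
  from assms(3,4) obtain p1 p2 where p: "x = poly (map_poly of_rat p1) (xi m)"
    "y = poly (map_poly of_rat p2) (xi m)" unfolding cyclo_field_def by auto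
  have "x + y = poly (map_poly of_rat (p1 + p2)) (xi m)" "x * y = poly (map_poly of_rat (p1 * p2)) (xi m)"
    unfolding p by (simp_all add: hom_distribs)
  thus "cyclo_aut m a (x + y) = cyclo_aut m a x + cyclo_aut m a y"
    "cyclo_aut m a (x * y) = cyclo_aut m a x * cyclo_aut m a y"
    by (simp_all only: cyclo_aut_poly[OF m a] p) (simp_all add: hom_distribs)
qed

lemma cyclo_aut_in_cyclo_gal:
  assumes m: "m > 0" and a: "coprime a m"
  shows "cyclo_aut m a \<in> cyclo_gal m"
  using inj_on_cyclo_aut[OF m a] cyclo_aut_image[OF m a] cyclo_aut_add_mult[OF m a]
    cyclo_aut_poly[OF m a, of 1]
  unfolding cyclo_gal_def bij_betw_def by simp


section \<open>Ramanujan sums\<close>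

definition units_mod :: "nat \<Rightarrow> nat set" where
  "units_mod m = {a \<in> {..<m}. coprime a m}"

definition ramanujan_sum :: "nat \<Rightarrow> int \<Rightarrow> complex" where
  "ramanujan_sum d j = (\<Sum>b\<in>units_mod d. (xi d powi j) ^ b)"

lemma finite_units_mod [simp]: "finite (units_mod m)"
  unfolding units_mod_def by simp

lemma units_mod_nonempty: "m > 0 \<Longrightarrow> units_mod m \<noteq> {}"
  unfolding units_mod_def by (cases "m = 1") (auto intro!: exI[of _ 1])

lemma power_int_root_of_unity:
  fixes z :: complex assumes zm: "z ^ m = 1" and m: "m > 0"
  shows "z powi j = z ^ nat (j mod int m)"
proof -
  have z0: "z \<noteq> 0" using zm m by (metis power_0_left zero_neq_one gr_implies_not0)
  have "z powi j = z powi (int m * (j div int m)) * z powi (j mod int m)"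
    by (metis power_int_add z0 div_mult_mod_eq mult.commute)
  also have "z powi (int m * (j div int m)) = 1" by (simp add: power_int_mult zm)
  also have "z powi (j mod int m) = z ^ nat (j mod int m)" using m by (simp add: power_int_def)
  finally show ?thesis by simp
qed

lemma xi_power_neq_1:
  assumes "0 < r" "r < m"
  shows "xi m ^ r \<noteq> 1"
proof
  assume "xi m ^ r = 1"
  hence "cis (2 * pi * r / m) = 1"
    unfolding xi_def by (simp flip: exp_of_nat_mult add: cis_conv_exp mult_ac)
  hence "cos (2 * pi * r / m) = 1" by (metis Re_complex_of_real cis.sel(1) one_complex.sel(1))
  then obtain k :: int where "2 * pi * r / m = of_int k * 2 * pi" using cos_one_2pi_int by blast
  hence "real r = real_of_int k * real m" using assms by (simp add: field_simps)
  hence rk: "int r = k * int m" by (metis of_int_eq_iff of_int_mult of_int_of_nat_eq)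
  hence "0 < k * int m" using assms by simp
  hence "k > 0" using assms by (simp add: zero_less_mult_iff)
  hence "1 * int m \<le> k * int m" by (intro mult_right_mono) simp_all
  hence "int m \<le> int r" unfolding rk by simp
  thus False using assms by linarith
qed

lemma sum_powers_xi_power_int:
  assumes m: "m > 0"
  shows "(\<Sum>a<m. (xi m powi j) ^ a) = (if int m dvd j then of_nat m else 0)"
proof -
  have xm: "xi m ^ m = 1" by (rule xi_power_eq_1[OF m])
  define r where "r = nat (j mod int m)"
  have z: "xi m powi j = xi m ^ r" unfolding r_def by (rule power_int_root_of_unity[OF xm m])
  show ?thesis
  proof (cases "int m dvd j")
    case True
    hence "r = 0" unfolding r_def by simp
    thus ?thesis using True z by simp
  next
    case False
    moreover have "0 \<le> j mod int m" "j mod int m < int m" using m by simp_all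
    ultimately have "r > 0" "r < m" unfolding r_def by (auto simp: dvd_eq_mod_eq_0)
    hence "xi m ^ r \<noteq> 1" by (rule xi_power_neq_1)
    moreover have "(xi m ^ r) ^ m = 1" by (metis power_mult mult.commute xm power_one)
    ultimately show ?thesis using False unfolding z by (simp add: sum_gp_strict)
  qed
qed

lemma xi_power_divisor: "m > 0 \<Longrightarrow> d * k = m \<Longrightarrow> xi m ^ k = xi d"
  unfolding xi_def by (auto simp flip: exp_of_nat_mult simp: field_simps)

text \<open>
  Grouping \<open>a < m\<close> by \<open>gcd a m\<close>: \<open>a = (m div d) * b\<close> with \<open>d | m\<close> and \<open>b\<close> a unit mod \<open>d\<close>.
\<close>
lemma sum_lessThan_group_by_gcd:
  assumes m: "m > 0"
  shows "(\<Sum>a<m. f a) = (\<Sum>d | d dvd m. \<Sum>b\<in>units_mod d. f (m div d * b))"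
proof -
  have fin: "finite {d. d dvd m}" using m by (simp add: finite_divisors_nat)
  have "(\<Sum>a<m. f a) = (\<Sum>(d, b)\<in>Sigma {d. d dvd m} units_mod. f (m div d * b))"
  proof (rule sum.reindex_bij_witness[where i = "\<lambda>(d, b). m div d * b"
        and j = "\<lambda>a. (m div gcd a m, a div gcd a m)"])
    fix a assume a: "a \<in> {..<m}"
    define g where "g = gcd a m"
    have g0: "g > 0" unfolding g_def using m by simp
    obtain c where c: "m = g * c" unfolding g_def by (metis gcd_dvd2 dvdE)
    obtain a' where a': "a = g * a'" unfolding g_def by (metis gcd_dvd1 dvdE)
    have mg: "m div g = c" "m div c = g" using c g0 m by auto
    have ia: "m div (m div g) * (a div g) = a" using mg a' g0 by simp
    thus "(case (m div gcd a m, a div gcd a m) of (d, b) \<Rightarrow> m div d * b) = a"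
      unfolding g_def[symmetric] by simp
    show "(case (m div gcd a m, a div gcd a m) of (d, b) \<Rightarrow> f (m div d * b)) = f a"
      using ia unfolding g_def[symmetric] by simp
    have "a' < c" using a c a' g0 by simp
    moreover have "coprime (a div g) (m div g)"
      unfolding g_def using m by (intro div_gcd_coprime) simp
    ultimately show "(m div gcd a m, a div gcd a m) \<in> Sigma {d. d dvd m} units_mod"
      unfolding g_def[symmetric] units_mod_def using mg a' c g0 by simp
  next
    fix x assume "x \<in> Sigma {d. d dvd m} units_mod"
    then obtain d b where x: "x = (d, b)" and d: "d dvd m" and b: "b < d" "coprime b d"
      unfolding units_mod_def by auto
    define k where "k = m div d"
    have mk: "m = k * d" unfolding k_def using d by simp
    have k0: "k > 0" using mk m by (simp add: gr0I)
    have "gcd (k * b) m = k * gcd b d" unfolding mk by (simp add: gcd_mult_distrib_nat)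
    hence "gcd (k * b) m = k" using b by simp
    thus "(case case x of (d, b) \<Rightarrow> m div d * b of a \<Rightarrow> (m div gcd a m, a div gcd a m)) = x"
      unfolding x k_def[symmetric] using k0 mk b by simp
    show "(case x of (d, b) \<Rightarrow> m div d * b) \<in> {..<m}"
      unfolding x k_def[symmetric] using b k0 mk by simp
  qed
  also have "\<dots> = (\<Sum>d | d dvd m. \<Sum>b\<in>units_mod d. f (m div d * b))"
    by (rule sum.Sigma[symmetric]) (use fin in auto)
  finally show ?thesis .
qed

lemma sum_ramanujan_sum_divisors:
  assumes m: "m > 0"
  shows "(\<Sum>d | d dvd m. ramanujan_sum d j) = (if int m dvd j then of_nat m else 0)"
proof -
  have "ramanujan_sum d j = (\<Sum>b\<in>units_mod d. (xi m powi j) ^ (m div d * b))" if "d dvd m" for d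
  proof -
    have "xi d = xi m ^ (m div d)" using m that by (intro xi_power_divisor[symmetric]) auto
    thus ?thesis unfolding ramanujan_sum_def by (simp add: power_int_power power_int_power' ac_simps)
  qed
  hence "(\<Sum>d | d dvd m. ramanujan_sum d j) =
      (\<Sum>d | d dvd m. \<Sum>b\<in>units_mod d. (xi m powi j) ^ (m div d * b))"
    by (intro sum.cong) auto
  also have "\<dots> = (\<Sum>a<m. (xi m powi j) ^ a)" by (rule sum_lessThan_group_by_gcd[OF m, symmetric])
  also have "\<dots> = (if int m dvd j then of_nat m else 0)" by (rule sum_powers_xi_power_int[OF m])
  finally show ?thesis .
qed

text \<open>
  Strong induction on \<open>m\<close>: \<open>c\<^sub>m(j) = m [m | j] - \<Sum>\<^bsub>d | m, d < m\<^esub> c\<^sub>d(j)\<close>.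
\<close>
lemma ramanujan_sum_eq_divisibility_combination:
  assumes "m > 0" "m \<le> M"
  shows "\<exists>\<alpha> :: nat \<Rightarrow> int. \<forall>j. ramanujan_sum m j = (\<Sum>e=1..M. of_int (\<alpha> e) * of_bool (int e dvd j))"
  using assms
proof (induction m rule: less_induct)
  case (less m)
  define D where "D = {d. d dvd m} - {m}"
  have "0 < d \<and> d < m" if "d \<in> D" for d
    using that less.prems unfolding D_def by (auto intro: gr0I dest: dvd_imp_le)
  hence "\<forall>d\<in>D. \<exists>\<alpha> :: nat \<Rightarrow> int. \<forall>j. ramanujan_sum d j = (\<Sum>e=1..M. of_int (\<alpha> e) * of_bool (int e dvd j))"
    using less.IH less.prems by force
  then obtain A where A: "\<And>d j. d \<in> D \<Longrightarrow>
      ramanujan_sum d j = (\<Sum>e=1..M. of_int (A d e) * of_bool (int e dvd j))"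
    by metis
  define \<alpha> where "\<alpha> = (\<lambda>e. (if e = m then int m else 0) - (\<Sum>d\<in>D. A d e))"
  have "ramanujan_sum m j = (\<Sum>e=1..M. of_int (\<alpha> e) * of_bool (int e dvd j))" for j
  proof -
    have fin: "finite {d. d dvd m}" using less.prems by (simp add: finite_divisors_nat)
    have "(\<Sum>d | d dvd m. ramanujan_sum d j) = ramanujan_sum m j + (\<Sum>d\<in>D. ramanujan_sum d j)"
      unfolding D_def using fin by (subst sum.remove[of _ m]) auto
    hence "ramanujan_sum m j = (if int m dvd j then of_nat m else 0) - (\<Sum>d\<in>D. ramanujan_sum d j)"
      using sum_ramanujan_sum_divisors[OF less.prems(1), of j] by (simp add: algebra_simps)
    also have "(if int m dvd j then of_nat m else 0) =
        (\<Sum>e=1..M. of_int (if e = m then int m else 0) * of_bool (int e dvd j))"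
      using less.prems by (simp add: if_distrib[of "\<lambda>x. of_int x * _"] sum.delta' cong: if_cong)
    also have "(\<Sum>d\<in>D. ramanujan_sum d j) = (\<Sum>e=1..M. \<Sum>d\<in>D. of_int (A d e) * of_bool (int e dvd j))"
      using A by (simp add: sum.swap[of _ D])
    also have "(\<Sum>e=1..M. of_int (if e = m then int m else 0) * of_bool (int e dvd j)) -
        (\<Sum>e=1..M. \<Sum>d\<in>D. of_int (A d e) * of_bool (int e dvd j)) =
        (\<Sum>e=1..M. of_int (\<alpha> e) * of_bool (int e dvd j))"
      unfolding \<alpha>_def
      by (simp only: of_int_diff of_int_sum left_diff_distrib sum_distrib_right sum_subtractf)
    finally show ?thesis .
  qed
  thus ?case by blast
qed


section \<open>Positive definite quadratic forms\<close>

definition qform :: "(nat \<Rightarrow> nat \<Rightarrow> real) \<Rightarrow> nat set \<Rightarrow> (nat \<Rightarrow> real) \<Rightarrow> real" where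
  "qform A I x = (\<Sum>i\<in>I. \<Sum>j\<in>I. A i j * x i * x j)"

lemma qform_insert:
  assumes "finite I" "e \<notin> I"
  shows "qform A (insert e I) x = A e e * (x e)\<^sup>2 + x e * (\<Sum>j\<in>I. (A e j + A j e) * x j) + qform A I x"
  using assms
  by (simp add: qform_def sum.distrib sum_distrib_left power2_eq_square algebra_simps)

lemma qform_cong: "(\<And>i. i \<in> I \<Longrightarrow> x i = y i) \<Longrightarrow> qform A I x = qform A I y"
  unfolding qform_def by (intro sum.cong refl) auto

definition qform_pos_def :: "(nat \<Rightarrow> nat \<Rightarrow> real) \<Rightarrow> nat set \<Rightarrow> bool" where
  "qform_pos_def A I \<longleftrightarrow> (\<forall>x. (\<exists>i\<in>I. x i \<noteq> 0) \<longrightarrow> qform A I x > 0)"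

lemma qform_pos_def_nonneg: "qform_pos_def A I \<Longrightarrow> qform A I x \<ge> 0"
  unfolding qform_pos_def_def qform_def by (cases "\<exists>i\<in>I. x i \<noteq> 0") (auto intro: less_imp_le)

lemma qform_pos_def_diag_pos:
  assumes "finite I" "e \<notin> I" "qform_pos_def A (insert e I)"
  shows "A e e > 0"
proof -
  have "(\<Sum>j\<in>I. (A e j + A j e) * (if j = e then 1 else 0)) = 0"
    using assms(2) by (intro sum.neutral) auto
  moreover have "qform A I (\<lambda>i. if i = e then 1 else 0) = 0"
    unfolding qform_def using assms(2) by (auto intro!: sum.neutral)
  moreover have "qform A (insert e I) (\<lambda>i. if i = e then 1 else 0) > 0"
    using assms(3) unfolding qform_pos_def_def by auto
  ultimately show ?thesis unfolding qform_insert[OF assms(1,2)] by simp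
qed

lemma square_completion:
  fixes a t l r :: real
  assumes "a \<noteq> 0"
  shows "a * t\<^sup>2 + t * l + r = a * (t + l / (2 * a))\<^sup>2 + (r - l\<^sup>2 / (4 * a))"
  using assms by (simp add: field_simps power2_eq_square)

definition schur_complement :: "(nat \<Rightarrow> nat \<Rightarrow> real) \<Rightarrow> nat \<Rightarrow> nat \<Rightarrow> nat \<Rightarrow> real" where
  "schur_complement A e i j = A i j - (A e i + A i e) * (A e j + A j e) / (4 * A e e)"

lemma qform_insert_complete_square:
  assumes "finite I" "e \<notin> I" "A e e \<noteq> 0"
  defines "L \<equiv> \<lambda>x. \<Sum>j\<in>I. (A e j + A j e) * x j"
  shows "qform A (insert e I) x = A e e * (x e + L x / (2 * A e e))\<^sup>2 + qform (schur_complement A e) I x"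
proof -
  have "(L x)\<^sup>2 = (\<Sum>i\<in>I. \<Sum>j\<in>I. (A e i + A i e) * (A e j + A j e) * x i * x j)"
    unfolding L_def power2_eq_square sum_product by (simp add: algebra_simps)
  hence "qform (schur_complement A e) I x = qform A I x - (L x)\<^sup>2 / (4 * A e e)"
    unfolding qform_def schur_complement_def by (simp add: algebra_simps sum_subtractf sum_divide_distrib)
  moreover have "qform A (insert e I) x = A e e * (x e)\<^sup>2 + x e * L x + qform A I x"
    unfolding qform_insert[OF assms(1,2)] L_def ..
  ultimately show ?thesis using square_completion[OF assms(3)] by simp
qed

lemma qform_pos_def_schur_complement:
  assumes I: "finite I" "e \<notin> I" and pd: "qform_pos_def A (insert e I)"
  shows "qform_pos_def (schur_complement A e) I"
  unfolding qform_pos_def_def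
proof (intro allI impI)
  fix x :: "nat \<Rightarrow> real" assume nz: "\<exists>i\<in>I. x i \<noteq> 0"
  define a where "a = A e e"
  have a0: "a > 0" unfolding a_def by (rule qform_pos_def_diag_pos[OF I pd])
  define L where "L = (\<lambda>x. \<Sum>j\<in>I. (A e j + A j e) * x j)"
  define y where "y = x(e := - L x / (2 * a))"
  have yx: "\<And>i. i \<in> I \<Longrightarrow> y i = x i" unfolding y_def using I by auto
  have "L y = L x" unfolding L_def using yx by (intro sum.cong) auto
  hence "y e + L y / (2 * a) = 0" unfolding y_def by simp
  moreover have "\<exists>i\<in>insert e I. y i \<noteq> 0" using nz yx by auto
  hence "qform A (insert e I) y > 0" using pd unfolding qform_pos_def_def by blast
  ultimately have "qform (schur_complement A e) I y > 0"
    using qform_insert_complete_square[OF I, of A y] a0 unfolding a_def L_def by simp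
  thus "qform (schur_complement A e) I x > 0" using qform_cong[of I y x] yx by simp
qed

text \<open>
  Induction on \<open>I\<close>: completing the square in \<open>x\<^sub>e\<close> bounds \<open>x\<^sub>e\<close> in terms of the
  remaining coordinates, which are bounded by the induction hypothesis for the Schur complement.
\<close>
lemma qform_pos_def_sublevel_bounded:
  assumes "finite I" and "qform_pos_def A I"
  shows "\<exists>B. \<forall>x. qform A I x \<le> N \<longrightarrow> (\<forall>i\<in>I. \<bar>x i\<bar> \<le> B)"
  using assms
proof (induction I arbitrary: A N rule: finite_induct)
  case empty
  show ?case by auto
next
  case (insert e I)
  define a where "a = A e e"
  have a0: "a > 0" unfolding a_def by (rule qform_pos_def_diag_pos[OF insert.hyps insert.prems])
  define L where "L = (\<lambda>x. \<Sum>j\<in>I. (A e j + A j e) * x j)"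
  define A' where "A' = schur_complement A e"
  have decomp: "qform A (insert e I) x = a * (x e + L x / (2 * a))\<^sup>2 + qform A' I x" for x
    unfolding a_def L_def A'_def using a0 a_def by (intro qform_insert_complete_square insert.hyps) simp
  have pd': "qform_pos_def A' I"
    unfolding A'_def by (rule qform_pos_def_schur_complement[OF insert.hyps insert.prems])
  obtain B' where B': "\<And>x. qform A' I x \<le> N \<Longrightarrow> \<forall>i\<in>I. \<bar>x i\<bar> \<le> B'"
    using insert.IH[OF pd'] by blast
  define C where "C = (\<Sum>j\<in>I. \<bar>A e j + A j e\<bar> * B')"
  define B where "B = max B' (sqrt (\<bar>N\<bar> / a) + C / (2 * a))"
  have "\<forall>i\<in>insert e I. \<bar>x i\<bar> \<le> B" if le: "qform A (insert e I) x \<le> N" for x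
  proof -
    have "a * (x e + L x / (2 * a))\<^sup>2 \<ge> 0" using a0 by simp
    hence "qform A' I x \<le> N" using le unfolding decomp by linarith
    hence xb: "\<forall>i\<in>I. \<bar>x i\<bar> \<le> B'" by (rule B')
    have "\<bar>L x\<bar> \<le> (\<Sum>j\<in>I. \<bar>(A e j + A j e) * x j\<bar>)" unfolding L_def by (rule sum_abs)
    also have "\<dots> \<le> C" unfolding C_def using xb by (intro sum_mono) (simp add: abs_mult mult_left_mono)
    finally have "\<bar>L x / (2 * a)\<bar> \<le> C / (2 * a)" using a0 by (simp add: divide_right_mono abs_divide)
    moreover have "a * (x e + L x / (2 * a))\<^sup>2 \<le> \<bar>N\<bar>"
      using le qform_pos_def_nonneg[OF pd', of x] unfolding decomp by linarith
    hence "(x e + L x / (2 * a))\<^sup>2 \<le> \<bar>N\<bar> / a" using a0 by (simp add: field_simps mult.commute)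
    hence "\<bar>x e + L x / (2 * a)\<bar> \<le> sqrt (\<bar>N\<bar> / a)" using real_sqrt_le_mono by fastforce
    ultimately have "\<bar>x e\<bar> \<le> sqrt (\<bar>N\<bar> / a) + C / (2 * a)" by linarith
    thus ?thesis using xb unfolding B_def by auto
  qed
  thus ?case by blast
qed

lemma int_pd_qform_finite_level:
  assumes "int_pd_qform n Q"
  shows "finite {k\<in>Zn n. Q k = N}"
proof -
  from assms obtain A
    where A: "\<forall>k\<in>Zn n. real_of_int (Q k) = qform A {..<n} (\<lambda>i. real_of_int (k i))"
      and P: "qform_pos_def A {..<n}"
    unfolding int_pd_qform_def qform_pos_def_def qform_def by auto
  obtain B where B: "\<And>x. qform A {..<n} x \<le> of_int N \<Longrightarrow> \<forall>i\<in>{..<n}. \<bar>x i\<bar> \<le> B"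
    using qform_pos_def_sublevel_bounded[OF _ P, of "of_int N"] by blast
  define b where "b = \<lceil>B\<rceil>"
  have "{k\<in>Zn n. Q k = N} \<subseteq> {f. \<forall>i. (i \<in> {..<n} \<longrightarrow> f i \<in> {-b..b}) \<and> (i \<notin> {..<n} \<longrightarrow> f i = 0)}"
  proof
    fix k assume "k \<in> {k\<in>Zn n. Q k = N}"
    hence k: "k \<in> Zn n" "Q k = N" by auto
    have "\<bar>k i\<bar> \<le> b" if "i < n" for i
    proof -
      have "qform A {..<n} (\<lambda>i. real_of_int (k i)) = of_int N" using A k by auto
      hence "\<forall>i\<in>{..<n}. \<bar>real_of_int (k i)\<bar> \<le> B" by (intro B) simp
      hence "\<bar>real_of_int (k i)\<bar> \<le> B" using that by simp
      thus ?thesis unfolding b_def by linarith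
    qed
    thus "k \<in> {f. \<forall>i. (i \<in> {..<n} \<longrightarrow> f i \<in> {-b..b}) \<and> (i \<notin> {..<n} \<longrightarrow> f i = 0)}"
      using k(1) unfolding Zn_def by (force simp: abs_le_iff)
  qed
  moreover have "finite {f. \<forall>i. (i \<in> {..<n} \<longrightarrow> f i \<in> {-b..b}) \<and> (i \<notin> {..<n} \<longrightarrow> f i = (0 :: int))}"
    by (rule finite_set_of_finite_funs) auto
  ultimately show ?thesis by (rule finite_subset)
qed

definition scale_first :: "((nat \<Rightarrow> int) \<Rightarrow> int) \<Rightarrow> nat \<Rightarrow> (nat \<Rightarrow> int) \<Rightarrow> int" where
  "scale_first Q e k = Q (k(0 := int e * k 0))"

lemma Zn_fun_upd_0: "n > 0 \<Longrightarrow> k \<in> Zn n \<Longrightarrow> k(0 := v) \<in> Zn n"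
  unfolding Zn_def by auto

lemma card_scale_first_level:
  assumes n: "n > 0" and e: "e > 0"
  shows "card {k\<in>Zn n. scale_first Q e k = N} = card {k\<in>Zn n. Q k = N \<and> int e dvd k 0}"
proof -
  define f where "f = (\<lambda>k :: nat \<Rightarrow> int. k(0 := int e * k 0))"
  have inj: "inj_on f {k\<in>Zn n. scale_first Q e k = N}"
  proof (rule inj_onI)
    fix k k' assume eq: "f k = f k'"
    have "k i = k' i" for i
      using fun_cong[OF eq, of i] e unfolding f_def by (cases "i = 0") auto
    thus "k = k'" by (rule ext)
  qed
  have img: "f ` {k\<in>Zn n. scale_first Q e k = N} = {k\<in>Zn n. Q k = N \<and> int e dvd k 0}"
  proof
    show "f ` {k\<in>Zn n. scale_first Q e k = N} \<subseteq> {k\<in>Zn n. Q k = N \<and> int e dvd k 0}"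
    proof
      fix x assume "x \<in> f ` {k\<in>Zn n. scale_first Q e k = N}"
      then obtain k where k: "k \<in> Zn n" "scale_first Q e k = N" and x: "x = f k" by blast
      show "x \<in> {k\<in>Zn n. Q k = N \<and> int e dvd k 0}"
        using Zn_fun_upd_0[OF n k(1)] k(2) unfolding x f_def scale_first_def by simp
    qed
    show "{k\<in>Zn n. Q k = N \<and> int e dvd k 0} \<subseteq> f ` {k\<in>Zn n. scale_first Q e k = N}"
    proof
      fix k assume "k \<in> {k\<in>Zn n. Q k = N \<and> int e dvd k 0}"
      hence k: "k \<in> Zn n" "Q k = N" "int e dvd k 0" by auto
      then obtain t where t: "k 0 = int e * t" by (elim dvdE)
      have fk: "f (k(0 := t)) = k" unfolding f_def using t by (intro ext) simp
      have "scale_first Q e (k(0 := t)) = N" using k(2) unfolding scale_first_def fk[unfolded f_def] .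
      hence "k(0 := t) \<in> {k\<in>Zn n. scale_first Q e k = N}" using Zn_fun_upd_0[OF n k(1)] by blast
      thus "k \<in> f ` {k\<in>Zn n. scale_first Q e k = N}" by (rule rev_image_eqI) (rule fk[symmetric])
    qed
  qed
  show ?thesis using card_image[OF inj] unfolding img by simp
qed

lemma int_pd_qform_scale_first:
  assumes n: "n > 0" and e: "e > 0" and pd: "int_pd_qform n Q"
  shows "int_pd_qform n (scale_first Q e)"
proof -
  from pd obtain A
    where A: "\<forall>k\<in>Zn n. real_of_int (Q k) = (\<Sum>i<n. \<Sum>j<n. A i j * real_of_int (k i) * real_of_int (k j))"
      and P: "\<forall>x :: nat \<Rightarrow> real. (\<exists>i<n. x i \<noteq> 0) \<longrightarrow> (\<Sum>i<n. \<Sum>j<n. A i j * x i * x j) > 0"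
    unfolding int_pd_qform_def by blast
  define w where "w = (\<lambda>i :: nat. if i = 0 then real e else 1)"
  have w0: "w i \<noteq> 0" for i using e unfolding w_def by simp
  have eq: "(\<Sum>i<n. \<Sum>j<n. (A i j * w i * w j) * x i * x j) =
      (\<Sum>i<n. \<Sum>j<n. A i j * (w i * x i) * (w j * x j))" for x
    by (simp add: algebra_simps)
  show ?thesis unfolding int_pd_qform_def
  proof (intro exI[of _ "\<lambda>i j. A i j * w i * w j"] conjI ballI allI impI)
    fix k assume k: "k \<in> Zn n"
    have "real_of_int (scale_first Q e k) = (\<Sum>i<n. \<Sum>j<n.
        A i j * real_of_int ((k(0 := int e * k 0)) i) * real_of_int ((k(0 := int e * k 0)) j))"
      unfolding scale_first_def using A Zn_fun_upd_0[OF n k] by blast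
    also have "\<dots> = (\<Sum>i<n. \<Sum>j<n. A i j * (w i * real_of_int (k i)) * (w j * real_of_int (k j)))"
      by (intro sum.cong refl) (simp add: w_def)
    finally show "real_of_int (scale_first Q e k) =
        (\<Sum>i<n. \<Sum>j<n. (A i j * w i * w j) * real_of_int (k i) * real_of_int (k j))"
      unfolding eq .
  next
    fix x :: "nat \<Rightarrow> real" assume "\<exists>i<n. x i \<noteq> 0"
    hence "\<exists>i<n. w i * x i \<noteq> 0" using w0 by auto
    thus "(\<Sum>i<n. \<Sum>j<n. (A i j * w i * w j) * x i * x j) > 0"
      unfolding eq using P[rule_format, of "\<lambda>i. w i * x i"] by simp
  qed
qed


section \<open>Averaging over the Galois group\<close>

lemma poly_sum_monom_of_rat:
  "poly (map_poly (of_rat :: rat \<Rightarrow> complex) (\<Sum>k\<in>S. Polynomial.monom 1 (r k))) x = (\<Sum>k\<in>S. x ^ r k)"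
  by (simp add: of_rat_poly.hom_sum poly_sum Polynomial.map_poly_monom poly_monom)

lemma gal_invariant_sum_xi_power_int:
  assumes m: "m > 0" and a: "coprime a m"
    and inv: "\<forall>g\<in>cyclo_gal m. g (\<Sum>k\<in>S. xi m powi f k) = (\<Sum>k\<in>S. xi m powi f k)"
  shows "(\<Sum>k\<in>S. xi m powi f k) = (\<Sum>k\<in>S. (xi m powi f k) ^ a)"
proof -
  define r where "r = (\<lambda>k. nat (f k mod int m))"
  have pw: "xi m powi f k = xi m ^ r k" for k
    unfolding r_def by (rule power_int_root_of_unity[OF xi_power_eq_1[OF m] m])
  have "cyclo_aut m a (\<Sum>k\<in>S. xi m powi f k) =
      cyclo_aut m a (poly (map_poly of_rat (\<Sum>k\<in>S. Polynomial.monom 1 (r k))) (xi m))"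
    unfolding poly_sum_monom_of_rat pw ..
  also have "\<dots> = (\<Sum>k\<in>S. (xi m powi f k) ^ a)"
    by (subst cyclo_aut_poly[OF m a]) (simp add: poly_sum_monom_of_rat pw mult.commute flip: power_mult)
  finally show ?thesis using inv cyclo_aut_in_cyclo_gal[OF m a] by metis
qed

lemma coeff_theta_m_gal_average:
  assumes m: "m > 0"
    and inv: "\<forall>g\<in>cyclo_gal m. \<forall>N. g (fps_nth (theta_m n Q m) N) = fps_nth (theta_m n Q m) N"
  shows "of_nat (card (units_mod m)) * fps_nth (theta_m n Q m) N =
    (\<Sum>k | k \<in> Zn n \<and> Q k = int N. ramanujan_sum m (k 0))"
proof -
  define S where "S = {k\<in>Zn n. Q k = int N}"
  have coeff: "fps_nth (theta_m n Q m) N = (\<Sum>k\<in>S. xi m powi k 0)"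
    unfolding theta_m_def S_def by simp
  have inv_S: "\<forall>g\<in>cyclo_gal m. g (\<Sum>k\<in>S. xi m powi k 0) = (\<Sum>k\<in>S. xi m powi k 0)"
    using inv unfolding coeff[symmetric] by blast
  have "of_nat (card (units_mod m)) * fps_nth (theta_m n Q m) N = (\<Sum>a\<in>units_mod m. \<Sum>k\<in>S. xi m powi k 0)"
    unfolding coeff by simp
  also have "\<dots> = (\<Sum>a\<in>units_mod m. \<Sum>k\<in>S. (xi m powi k 0) ^ a)"
    using inv_S by (intro sum.cong refl gal_invariant_sum_xi_power_int[OF m]) (simp_all add: units_mod_def)
  also have "\<dots> = (\<Sum>k\<in>S. ramanujan_sum m (k 0))"
    unfolding ramanujan_sum_def by (rule sum.swap)
  finally show ?thesis unfolding S_def .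
qed

lemma sum_ramanujan_sum_level_eq_theta:
  assumes n: "n > 0" and pd: "int_pd_qform n Q"
    and \<alpha>: "\<And>j. ramanujan_sum m j = (\<Sum>e=1..M. of_int (\<alpha> e) * of_bool (int e dvd j))"
  shows "(\<Sum>k | k \<in> Zn n \<and> Q k = int N. ramanujan_sum m (k 0)) =
    (\<Sum>e=1..M. of_int (\<alpha> e) * fps_nth (theta n (scale_first Q e)) N)"
proof -
  define S where "S = {k\<in>Zn n. Q k = int N}"
  have fin: "finite S" unfolding S_def by (rule int_pd_qform_finite_level[OF pd])
  have "(\<Sum>k\<in>S. ramanujan_sum m (k 0)) = (\<Sum>e=1..M. of_int (\<alpha> e) * (\<Sum>k\<in>S. of_bool (int e dvd k 0)))"
    unfolding \<alpha> by (subst sum.swap) (simp add: sum_distrib_left)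
  also have "\<dots> = (\<Sum>e=1..M. of_int (\<alpha> e) * fps_nth (theta n (scale_first Q e)) N)"
  proof (intro sum.cong refl)
    fix e assume "e \<in> {1..M}"
    hence "card {k\<in>S. int e dvd k 0} = card {k\<in>Zn n. scale_first Q e k = int N}"
      unfolding S_def by (subst card_scale_first_level[OF n]) (auto intro: arg_cong[of _ _ card])
    thus "of_int (\<alpha> e) * (\<Sum>k\<in>S. of_bool (int e dvd k 0)) =
        of_int (\<alpha> e) * fps_nth (theta n (scale_first Q e)) N"
      using sum.inter_filter[OF fin, of "\<lambda>_. 1 :: complex" "\<lambda>k. int e dvd k 0"]
      by (simp add: theta_def of_bool_def if_distrib[of of_nat] sum.If_cases[OF fin])
  qed
  finally show ?thesis unfolding S_def by simp
qed

lemma theta_m_gal_invariant_eq: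
  assumes n: "n > 0" and m: "m > 0" and pd: "int_pd_qform n Q"
    and inv: "\<forall>g\<in>cyclo_gal m. \<forall>N. g (fps_nth (theta_m n Q m) N) = fps_nth (theta_m n Q m) N"
    and \<alpha>: "\<And>j. ramanujan_sum m j = (\<Sum>e=1..M. of_int (\<alpha> e) * of_bool (int e dvd j))"
  shows "theta_m n Q m =
    (\<Sum>e=1..M. fps_const (of_int (\<alpha> e) / of_nat (card (units_mod m))) * theta n (scale_first Q e))"
proof -
  have "fps_nth (theta_m n Q m) N =
      (\<Sum>e=1..M. of_int (\<alpha> e) * fps_nth (theta n (scale_first Q e)) N) / of_nat (card (units_mod m))" for N
    using coeff_theta_m_gal_average[OF m inv, of N] sum_ramanujan_sum_level_eq_theta[OF n pd \<alpha>, of N]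
      units_mod_nonempty[OF m]
    by (simp add: eq_divide_eq mult.commute)
  thus ?thesis by (simp add: fps_eq_iff fps_sum_nth sum_divide_distrib)
qed

theorem proposition3p2:
  fixes n m :: nat and Q :: "(nat \<Rightarrow> int) \<Rightarrow> int"
  assumes "n > 0" and "m > 0"
    and "int_pd_qform n Q"
    and "\<forall>g\<in>cyclo_gal m. \<forall>N. g (fps_nth (theta_m n Q m) N) = fps_nth (theta_m n Q m) N"
  shows "\<exists>(r :: nat) (c :: nat \<Rightarrow> rat) (Qs :: nat \<Rightarrow> (nat \<Rightarrow> int) \<Rightarrow> int).
           (\<forall>i<r. int_pd_qform n (Qs i)) \<and>
           theta_m n Q m = (\<Sum>i<r. fps_const (of_rat (c i)) * theta n (Qs i))"
proof -
  obtain \<alpha> where \<alpha>: "\<And>j. ramanujan_sum m j = (\<Sum>e=1..m. of_int (\<alpha> e) * of_bool (int e dvd j))"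
    using ramanujan_sum_eq_divisibility_combination[OF assms(2) order.refl] by blast
  define c where "c = (\<lambda>i. rat_of_int (\<alpha> (Suc i)) / rat_of_nat (card (units_mod m)))"
  define Qs where "Qs = (\<lambda>i. scale_first Q (Suc i))"
  have "theta_m n Q m = (\<Sum>i<m. fps_const (of_rat (c i)) * theta n (Qs i))"
    unfolding theta_m_gal_invariant_eq[OF assms \<alpha>] c_def Qs_def
    by (simp add: sum.atLeast1_atMost_eq of_rat_divide)
  moreover have "int_pd_qform n (Qs i)" for i
    unfolding Qs_def by (rule int_pd_qform_scale_first[OF assms(1) _ assms(3)]) simp
  ultimately show ?thesis by blast
qed

end
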